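(* Let $a$ and $b$ be relatively prime integers with $1<a<b$, let $(u,v)$ be the definitely least solution of $ax+by=1$, and let $S=\langle a,b\rangle$. If $I_{i,a}(S)\neq\varnothing$ for some $i\in\{1,\dots,a-1\}$ and $h_i=\min I_{i,a}(S)$, then $I_{i,a}(S)=\{h_i,h_i+a,\dots,h_i+(|u|-1)a\}$.
   Context: $\langle a,b\rangle=\{\lambda_1a+\lambda_2b:\lambda_1,\lambda_2\in\mathbb{N}\}$. $I(S)$ is the set of isolated gaps of $S$ ($x\in\mathbb{N}\setminus S$ with $x-1,x+1\in S$), and $I_{i,a}(S)=\{s\in I(S):s\equiv i\pmod a\}$. The definitely least solution $(u,v)$ of $ax+by=1$ is the unique integer solution with $|u|,|v|$ minimal; equivalently the one with $|u|\le b/2$, $|v|\le a/2$. *)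

theory Defs
  imports Main
begin

definition gen2 :: "nat \<Rightarrow> nat \<Rightarrow> nat set" where
  "gen2 a b = {l1 * a + l2 * b | l1 l2. True}"

definition isolated_gaps :: "nat set \<Rightarrow> nat set" where
  "isolated_gaps S = {x. 0 < x \<and> x \<notin> S \<and> x - 1 \<in> S \<and> x + 1 \<in> S}"

definition isolated_gaps_mod :: "nat set \<Rightarrow> nat \<Rightarrow> nat \<Rightarrow> nat set" where
  "isolated_gaps_mod S i a = {s \<in> isolated_gaps S. s mod a = i mod a}"

definition definitely_least_solution :: "int \<Rightarrow> int \<Rightarrow> int \<Rightarrow> int \<Rightarrow> bool" where
  "definitely_least_solution a b u v \<longleftrightarrow>
     a * u + b * v = 1 \<and> 2 * \<bar>u\<bar> \<le> b \<and> 2 * \<bar>v\<bar> \<le> a"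

end

theory Submission
  imports Defs
begin

(* Since a u + b v = 1, we have v b = 1 (mod a), and b ((n v) mod a) is the least element
   of <a,b> congruent to n modulo a. So n lies in <a,b> iff it is at least this threshold,
   and passing from n to n + 1 or n - 1 shifts the coefficient (n v) mod a by +v or -v.
   For a gap n = i (mod a) below the threshold y b, y = (i v) mod a, both neighbours can
   lie in <a,b> only if the shifted coefficients y + |v| and y - |v| wrap around modulo a
   in the right direction. Then |v| b = sgn v + |u| a turns the two neighbour conditions
   into the linear bounds n >= y b - |u| a and n >= y b + |u| a - a b, of which the second
   is implied by the first because 2 |u| <= b. Hence the isolated gaps of the class are
   y b - k a for k = 1, ..., |u|. *)

lemma gen2_mem_iff:
  fixes a b n :: nat and u v :: int
  assumes bezout: "int a * u + int b * v = 1" and "0 < a"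
  shows "n \<in> gen2 a b \<longleftrightarrow> (int n * v) mod int a * int b \<le> int n"
proof
  assume "n \<in> gen2 a b"
  then obtain l1 l2 where n: "n = l1 * a + l2 * b" unfolding gen2_def by blast
  have "int n * v = int l2 * (int a * u + int b * v) + int a * (int l1 * v - int l2 * u)"
    unfolding n by (simp add: algebra_simps)
  then have "int n * v = int l2 + int a * (int l1 * v - int l2 * u)" using bezout by simp
  then have "(int n * v) mod int a = int l2 mod int a" by simp
  also have "\<dots> \<le> int l2" using \<open>0 < a\<close> by (simp add: zmod_le_nonneg_dividend)
  finally have "(int n * v) mod int a * int b \<le> int l2 * int b" by (simp add: mult_right_mono)
  also have "\<dots> \<le> int n" unfolding n by simp
  finally show "(int n * v) mod int a * int b \<le> int n" .
next
  assume below: "(int n * v) mod int a * int b \<le> int n"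
  define l2 where "l2 = (int n * v) mod int a"
  define q where "q = (int n * v) div int a"
  define l1 where "l1 = int n * u + int b * q"
  have "0 \<le> l2" using \<open>0 < a\<close> unfolding l2_def by simp
  have "int n * v = q * int a + l2" unfolding l2_def q_def by simp
  then have "int n - l2 * int b = int n * (int a * u + int b * v) - l2 * int b"
    using bezout by simp
  also have "\<dots> = int a * (int n * u) + (int n * v - l2) * int b" by (simp add: algebra_simps)
  also have "\<dots> = l1 * int a"
    using \<open>int n * v = q * int a + l2\<close> unfolding l1_def by (simp add: algebra_simps)
  finally have n: "int n = l1 * int a + l2 * int b" by linarith
  then have "0 \<le> l1 * int a" using below unfolding l2_def by simp
  then have "0 \<le> l1" using \<open>0 < a\<close> by (simp add: zero_le_mult_iff)
  with n \<open>0 \<le> l2\<close> have "int n = int (nat l1 * a + nat l2 * b)" by simp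
  then have "n = nat l1 * a + nat l2 * b" by (simp only: of_nat_eq_iff)
  then show "n \<in> gen2 a b" unfolding gen2_def by blast
qed

lemma mod_mult_bezout_coeff:
  fixes a b u v x :: int
  assumes "a * u + b * v = 1"
  shows "(x * v) mod a * b mod a = x mod a"
proof -
  have "(x * v) mod a * b mod a = x * v * b mod a" by (simp add: mod_mult_left_eq)
  also have "x * v * b = x * (a * u + b * v) + a * (- x * u)" by (simp add: algebra_simps)
  also have "\<dots> = x + a * (- x * u)" using assms by simp
  finally show ?thesis by (simp only: mod_mult_self2)
qed

lemma bezout_abs_coeff:
  fixes a b u v :: int
  assumes "1 < a" "1 < b" "a * u + b * v = 1"
  shows "v \<noteq> 0" and "\<bar>v\<bar> * b = sgn v + \<bar>u\<bar> * a"
proof -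
  show "v \<noteq> 0"
  proof
    assume "v = 0"
    then have "a * u = 1" using assms(3) by simp
    then show False using assms(1) by (simp add: zmult_eq_1_iff)
  qed
  show "\<bar>v\<bar> * b = sgn v + \<bar>u\<bar> * a"
  proof (cases "0 < v")
    case True
    then have "b * 1 \<le> b * v" using assms(2) by (intro mult_left_mono) auto
    then have "a * u < 0" using assms by linarith
    then have "u < 0" using assms(1) by (simp add: mult_less_0_iff)
    then show ?thesis using True assms(3) by (simp add: algebra_simps)
  next
    case False
    then have "v < 0" using \<open>v \<noteq> 0\<close> by simp
    then have "b * v \<le> b * (- 1)" using assms(2) by (intro mult_left_mono) auto
    then have "0 < a * u" using assms by linarith
    then have "0 < u" using assms(1) by (simp add: zero_less_mult_iff)
    then show ?thesis using \<open>v < 0\<close> assms(3) by (simp add: algebra_simps)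
  qed
qed

lemma isolated_gap_iff_neighbour_coeffs:
  fixes a b i n :: nat and u v :: int
  assumes bezout: "int a * u + int b * v = 1" and "v \<noteq> 0" "0 < i" "i < a" and n: "n mod a = i"
  defines "y \<equiv> (int i * v) mod int a"
  shows "n \<in> isolated_gaps (gen2 a b) \<longleftrightarrow>
    int n < y * int b \<and> (y + \<bar>v\<bar>) mod int a * int b \<le> int n + sgn v
      \<and> (y - \<bar>v\<bar>) mod int a * int b \<le> int n - sgn v"
proof -
  have "0 < n" using n \<open>0 < i\<close> by (cases n) auto
  have "int n mod int a = int i" using n by (metis of_nat_mod)
  then have coeff: "(int n * v) mod int a = y" unfolding y_def by (metis mod_mult_left_eq)
  have "(int (n + 1) * v) mod int a = (int n * v + v) mod int a" by (simp add: algebra_simps)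
  also have "\<dots> = (y + v) mod int a" using coeff by (metis mod_add_left_eq)
  finally have succ: "(int (n + 1) * v) mod int a = (y + v) mod int a" .
  have "(int (n - 1) * v) mod int a = (int n * v - v) mod int a"
    using \<open>0 < n\<close> by (simp add: of_nat_diff algebra_simps)
  also have "\<dots> = (y - v) mod int a" using coeff by (metis mod_diff_left_eq)
  finally have pred: "(int (n - 1) * v) mod int a = (y - v) mod int a" .
  have "0 < a" using assms by simp
  note mem = gen2_mem_iff[OF bezout \<open>0 < a\<close>]
  have "n \<notin> gen2 a b \<longleftrightarrow> int n < y * int b"
    using mem[of n] coeff by auto
  moreover have "n + 1 \<in> gen2 a b \<longleftrightarrow> (y + v) mod int a * int b \<le> int n + 1"
    using mem[of "n + 1"] succ by (simp add: add.commute)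
  moreover have "n - 1 \<in> gen2 a b \<longleftrightarrow> (y - v) mod int a * int b \<le> int n - 1"
    using mem[of "n - 1"] pred \<open>0 < n\<close> by (simp add: of_nat_diff)
  ultimately have "n \<in> isolated_gaps (gen2 a b) \<longleftrightarrow>
      int n < y * int b \<and> (y + v) mod int a * int b \<le> int n + 1
        \<and> (y - v) mod int a * int b \<le> int n - 1"
    unfolding isolated_gaps_def using \<open>0 < n\<close> by blast
  with \<open>v \<noteq> 0\<close> show ?thesis by (cases "0 < v") auto
qed

lemma residue_shifts_wrap:
  fixes a b d y n s :: int
  assumes "0 \<le> y" "y < a" "0 < d" "d < a" "0 < b" "\<bar>s\<bar> \<le> 1" "n < y * b"
    and up: "(y + d) mod a * b \<le> n + s" and down: "(y - d) mod a * b \<le> n - s"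
  shows "(y + d) mod a = y + d - a" and "(y - d) mod a = y - d"
proof -
  have "a \<le> y + d"
  proof (rule ccontr)
    assume "\<not> a \<le> y + d"
    then have "(y + d) mod a = y + d" using assms by simp
    then have "y * b + d * b \<le> n + s" using up by (simp add: distrib_right)
    moreover have "0 < d * b" using assms by simp
    ultimately show False using assms(6,7) by linarith
  qed
  have "(y + d) mod a = (y + d - a) mod a" using mod_add_self2[of "y + d - a" a] by simp
  also have "\<dots> = y + d - a" using assms \<open>a \<le> y + d\<close> by (intro mod_pos_pos_trivial) auto
  finally show "(y + d) mod a = y + d - a" .
  have "d \<le> y"
  proof (rule ccontr)
    assume "\<not> d \<le> y"
    have "(y - d) mod a = (y - d + a) mod a" by simp
    also have "\<dots> = y - d + a" using assms \<open>\<not> d \<le> y\<close> by (intro mod_pos_pos_trivial) auto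
    finally have "(y - d) mod a = y - d + a" .
    then have "(y - d + a) * b \<le> n - s" using down by simp
    then have "y * b + (a - d) * b \<le> n - s" by (simp add: algebra_simps)
    moreover have "0 < (a - d) * b" using assms by simp
    ultimately show False using assms(6,7) by linarith
  qed
  then show "(y - d) mod a = y - d" using assms by simp
qed

lemma isolated_gaps_in_residue_class:
  fixes a b i n0 :: nat and u v :: int
  assumes "1 < a" "a < b" "definitely_least_solution (int a) (int b) u v" "0 < i" "i < a"
    and n0: "n0 mod a = i" "n0 \<in> isolated_gaps (gen2 a b)"
  defines "y \<equiv> (int i * v) mod int a"
  shows "\<bar>u\<bar> * int a \<le> y * int b"
    and "n mod a = i \<Longrightarrow> n \<in> isolated_gaps (gen2 a b) \<longleftrightarrow>
           y * int b - \<bar>u\<bar> * int a \<le> int n \<and> int n < y * int b"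
proof -
  define A B d s where "A = int a" and "B = int b" and "d = \<bar>v\<bar>" and "s = sgn v"
  have bezout: "A * u + B * v = 1" and u_bound: "2 * \<bar>u\<bar> \<le> B" and d_bound: "2 * d \<le> A"
    using assms(3) unfolding definitely_least_solution_def A_def B_def d_def by auto
  have "1 < A" "1 < B" using assms(1,2) unfolding A_def B_def by auto
  have "v \<noteq> 0" and dB: "d * B = s + \<bar>u\<bar> * A"
    using bezout_abs_coeff[OF \<open>1 < A\<close> \<open>1 < B\<close> bezout] unfolding d_def s_def by auto
  note gap_iff = isolated_gap_iff_neighbour_coeffs[OF bezout[unfolded A_def B_def] \<open>v \<noteq> 0\<close> assms(4,5),
      folded y_def A_def B_def d_def s_def]
  have "int n0 < y * B" "(y + d) mod A * B \<le> int n0 + s" "(y - d) mod A * B \<le> int n0 - s"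
    using gap_iff n0 by auto
  then have up: "(y + d) mod A = y + d - A" and down: "(y - d) mod A = y - d"
    using residue_shifts_wrap[of y A d B s "int n0"] \<open>1 < A\<close> \<open>1 < B\<close> \<open>v \<noteq> 0\<close> d_bound
    unfolding y_def d_def s_def A_def by (auto simp: abs_sgn_eq)
  have uA_bound: "2 * (\<bar>u\<bar> * A) \<le> A * B"
    using mult_right_mono[OF u_bound, of A] \<open>1 < A\<close> by (simp add: algebra_simps)
  have "A \<le> 2 * y"
    using up d_bound pos_mod_sign[of A "y + d"] \<open>1 < A\<close> by linarith
  then have "A * B \<le> 2 * (y * B)" using mult_right_mono[of A "2 * y" B] \<open>1 < B\<close> by simp
  with uA_bound show "\<bar>u\<bar> * int a \<le> y * int b" unfolding A_def B_def by linarith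
  have "(y + d) mod A * B = y * B + d * B - A * B" unfolding up by (simp add: algebra_simps)
  also have "\<dots> = y * B + s + \<bar>u\<bar> * A - A * B" unfolding dB by simp
  finally have up_B: "(y + d) mod A * B = y * B + s + \<bar>u\<bar> * A - A * B" .
  have down_B: "(y - d) mod A * B = y * B - s - \<bar>u\<bar> * A"
    unfolding down left_diff_distrib dB by simp
  assume "n mod a = i"
  then have "n \<in> isolated_gaps (gen2 a b) \<longleftrightarrow> int n < y * B
      \<and> y * B + s + \<bar>u\<bar> * A - A * B \<le> int n + s \<and> y * B - s - \<bar>u\<bar> * A \<le> int n - s"
    using gap_iff up_B down_B by simp
  also have "\<dots> \<longleftrightarrow> y * B - \<bar>u\<bar> * A \<le> int n \<and> int n < y * B"
    using uA_bound by linarith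
  finally show "n \<in> isolated_gaps (gen2 a b) \<longleftrightarrow>
           y * int b - \<bar>u\<bar> * int a \<le> int n \<and> int n < y * int b"
    unfolding A_def B_def .
qed

lemma isolated_gaps_mod_eq_segment:
  fixes a b i :: nat and u v :: int
  assumes "1 < a" "a < b" "definitely_least_solution (int a) (int b) u v" "0 < i" "i < a"
    and "isolated_gaps_mod (gen2 a b) i a \<noteq> {}"
  defines "h \<equiv> nat ((int i * v) mod int a * int b - \<bar>u\<bar> * int a)"
  shows "isolated_gaps_mod (gen2 a b) i a =
           {n. n mod a = h mod a \<and> h \<le> n \<and> n < h + nat \<bar>u\<bar> * a}"
proof -
  define y where "y = (int i * v) mod int a"
  have in_class:
    "n \<in> isolated_gaps_mod (gen2 a b) i a \<longleftrightarrow> n mod a = i \<and> n \<in> isolated_gaps (gen2 a b)" for n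
    using \<open>i < a\<close> by (auto simp: isolated_gaps_mod_def)
  obtain n0 where "n0 mod a = i" "n0 \<in> isolated_gaps (gen2 a b)" using assms(6) in_class by blast
  note gaps = isolated_gaps_in_residue_class[OF assms(1-5) this, folded y_def]
  have int_h: "int h = y * int b - \<bar>u\<bar> * int a" using gaps(1) unfolding h_def y_def by simp
  have bezout: "int a * u + int b * v = 1"
    using assms(3) unfolding definitely_least_solution_def by simp
  have "int h = y * int b + (- \<bar>u\<bar>) * int a" using int_h by simp
  then have "int h mod int a = y * int b mod int a" by (simp only: mod_mult_self1)
  also have "\<dots> = int i"
    using mod_mult_bezout_coeff[OF bezout, of "int i"] \<open>i < a\<close> unfolding y_def by simp
  finally have "h mod a = i" by (simp only: zmod_int[symmetric] of_nat_eq_iff)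
  have "int (h + nat \<bar>u\<bar> * a) = y * int b" using int_h by simp
  then have upper: "n < h + nat \<bar>u\<bar> * a \<longleftrightarrow> int n < y * int b" for n by linarith
  have lower: "h \<le> n \<longleftrightarrow> y * int b - \<bar>u\<bar> * int a \<le> int n" for n using int_h by linarith
  show ?thesis
  proof (rule set_eqI)
    fix n
    show "n \<in> isolated_gaps_mod (gen2 a b) i a \<longleftrightarrow>
        n \<in> {n. n mod a = h mod a \<and> h \<le> n \<and> n < h + nat \<bar>u\<bar> * a}"
      using in_class[of n] gaps(2)[of n] lower[of n] upper[of n] \<open>h mod a = i\<close> by auto
  qed
qed

lemma residue_class_segment_eq_progression:
  fixes a h m :: nat
  assumes "0 < a"
  shows "{n. n mod a = h mod a \<and> h \<le> n \<and> n < h + m * a} = {h + k * a | k. k < m}"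
proof (intro set_eqI iffI)
  fix n assume "n \<in> {n. n mod a = h mod a \<and> h \<le> n \<and> n < h + m * a}"
  then have n: "n mod a = h mod a" "h \<le> n" "n < h + m * a" by auto
  then have "a dvd n - h" by (simp add: mod_eq_dvd_iff_nat)
  then obtain k where k: "n - h = k * a" by (metis dvd_def mult.commute)
  then have "k * a < m * a" using n(2,3) by linarith
  then have "k < m" by simp
  with k n(2) show "n \<in> {h + k * a | k. k < m}" by (intro CollectI exI[of _ k]) auto
next
  fix n assume "n \<in> {h + k * a | k. k < m}"
  then obtain k where "k < m" "n = h + k * a" by blast
  moreover have "k * a < m * a" using \<open>k < m\<close> \<open>0 < a\<close> by simp
  ultimately show "n \<in> {n. n mod a = h mod a \<and> h \<le> n \<and> n < h + m * a}" by simp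
qed

lemma Min_arith_progression:
  fixes a h m :: nat
  assumes "0 < m"
  shows "Min {h + k * a | k. k < m} = h"
proof -
  have "{h + k * a | k. k < m} = (\<lambda>k. h + k * a) ` {..<m}" by auto
  then show ?thesis using assms by (intro Min_eqI) auto
qed

theorem proposition4p7:
  fixes a b i :: nat and u v :: int
  assumes "coprime a b" and "1 < a" and "a < b"
    and "definitely_least_solution (int a) (int b) u v"
    and "1 \<le> i" and "i \<le> a - 1"
    and "isolated_gaps_mod (gen2 a b) i a \<noteq> {}"
  shows "isolated_gaps_mod (gen2 a b) i a =
           {Min (isolated_gaps_mod (gen2 a b) i a) + k * a | k. k < nat \<bar>u\<bar>}"
proof -
  let ?I = "isolated_gaps_mod (gen2 a b) i a"
  have "0 < i" "i < a" using assms(2,5,6) by auto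
  obtain h where "?I = {n. n mod a = h mod a \<and> h \<le> n \<and> n < h + nat \<bar>u\<bar> * a}"
    using isolated_gaps_mod_eq_segment[OF assms(2-4) \<open>0 < i\<close> \<open>i < a\<close> assms(7)] by blast
  also have "\<dots> = {h + k * a | k. k < nat \<bar>u\<bar>}"
    using residue_class_segment_eq_progression \<open>i < a\<close> by simp
  finally have progression: "?I = {h + k * a | k. k < nat \<bar>u\<bar>}" .
  then have "0 < nat \<bar>u\<bar>" using assms(7) by (auto intro: Nat.gr0I)
  with progression show ?thesis using Min_arith_progression by simp
qed

end
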